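(* Let $d\ge 11$ and set $$\alpha_{-}=2-2\sqrt{\frac{d-4}{3(d-2)}},\qquad \beta_{-}=\frac{2}{3}(d-4)-\frac{1}{3}\sqrt{3(d-2)(d-4)},\qquad u_{-}(y)=1-\frac{\alpha_{-}y^{2}}{y^{2}+\beta_{-}}.$$ Then $u_-\in C^\infty([0,1])$ and $u_-$ solves $$y^{2}(1-y^{2})u''(y)+\big((d-3)y-2y^{3}\big)u'(y)+(d-2)\,u(y)\big(1-u(y)^{2}\big)=0\quad\text{on } [0,1].$$
   Context: Here $d$ denotes the spatial dimension (an integer). Smoothness on $[0,1]$ means one-sided derivatives of all orders exist and are continuous up to the endpoints. *)

theory Defs
  imports "HOL-Analysis.Analysis"
begin

definition smooth_deriv_seq :: "real set \<Rightarrow> (real \<Rightarrow> real) \<Rightarrow> (nat \<Rightarrow> real \<Rightarrow> real) \<Rightarrow> bool" where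
  "smooth_deriv_seq S f D \<longleftrightarrow>
     (\<forall>x\<in>S. D 0 x = f x) \<and>
     (\<forall>k. \<forall>x\<in>S. (D k has_real_derivative D (Suc k) x) (at x within S)) \<and>
     (\<forall>k. continuous_on S (D k))"

definition C_infty_on :: "real set \<Rightarrow> (real \<Rightarrow> real) \<Rightarrow> bool" where
  "C_infty_on S f \<longleftrightarrow> (\<exists>D. smooth_deriv_seq S f D)"

definition alpha_minus :: "int \<Rightarrow> real" where
  "alpha_minus d = 2 - 2 * sqrt ((real_of_int d - 4) / (3 * (real_of_int d - 2)))"

definition beta_minus :: "int \<Rightarrow> real" where
  "beta_minus d = (2/3) * (real_of_int d - 4)
     - (1/3) * sqrt (3 * (real_of_int d - 2) * (real_of_int d - 4))"

definition u_minus :: "int \<Rightarrow> real \<Rightarrow> real" where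
  "u_minus d y = 1 - alpha_minus d * y\<^sup>2 / (y\<^sup>2 + beta_minus d)"

end

(* With s = y^2, the ansatz u = 1 - a s/(s + b) = ((1 - a) s + b)/(s + b) is a rational function
   whose denominator stays positive when b > 0, so it is smooth on the whole real line.
   Substituted into the equation it leaves the residual a y^4 (c2 y^2 + c1)/(y^2 + b)^3 (the
   y^2 term of the numerator cancels identically), and c2 = c1 = 0 are one quadratic and one
   linear relation between a, b and d.  The choice a = 2 - 2t, b = 2(d - 4)/3 - (d - 2) t with
   3 (d - 2) t^2 = d - 4 satisfies both, and b > 0 is exactly the condition d > 10. *)
theory Submission
  imports Defs "HOL-Computational_Algebra.Polynomial"
begin

(* The k-th derivative of p/q is rational_deriv_num p q k / q^(k+1). *)
fun rational_deriv_num :: "'a::real_normed_field poly \<Rightarrow> 'a poly \<Rightarrow> nat \<Rightarrow> 'a poly" where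
  "rational_deriv_num p q 0 = p"
| "rational_deriv_num p q (Suc k) =
     pderiv (rational_deriv_num p q k) * q
     - smult (of_nat (Suc k)) (rational_deriv_num p q k * pderiv q)"

lemma has_field_derivative_rational_deriv:
  assumes "poly q x \<noteq> 0"
  shows "((\<lambda>y. poly (rational_deriv_num p q k) y / poly q y ^ Suc k) has_field_derivative
           poly (rational_deriv_num p q (Suc k)) x / poly q x ^ Suc (Suc k)) (at x)"
proof -
  let ?r = "rational_deriv_num p q k"
  have "((\<lambda>y. poly ?r y / poly q y ^ Suc k) has_field_derivative
      (poly (pderiv ?r) x * poly q x ^ Suc k
        - poly ?r x * ((1 + of_nat k) * (poly (pderiv q) x * poly q x ^ k)))
      / (poly q x ^ Suc k * poly q x ^ Suc k)) (at x)"
    using assms by (intro DERIV_divide DERIV_power_Suc poly_DERIV) simp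
  moreover have "(poly (pderiv ?r) x * poly q x ^ Suc k
        - poly ?r x * ((1 + of_nat k) * (poly (pderiv q) x * poly q x ^ k)))
      / (poly q x ^ Suc k * poly q x ^ Suc k)
    = poly (rational_deriv_num p q (Suc k)) x / poly q x ^ Suc (Suc k)"
    using assms by (simp add: field_simps)
  ultimately show ?thesis
    by simp
qed

lemma smooth_deriv_seq_rational:
  fixes p q :: "real poly"
  assumes "\<forall>x\<in>S. poly q x \<noteq> 0"
  shows "smooth_deriv_seq S (\<lambda>y. poly p y / poly q y)
           (\<lambda>k y. poly (rational_deriv_num p q k) y / poly q y ^ Suc k)"
  unfolding smooth_deriv_seq_def
proof (intro conjI ballI allI)
  fix k x
  assume "x \<in> S"
  then show "((\<lambda>y. poly (rational_deriv_num p q k) y / poly q y ^ Suc k) has_real_derivative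
      poly (rational_deriv_num p q (Suc k)) x / poly q x ^ Suc (Suc k)) (at x within S)"
    using assms by (blast intro: has_field_derivative_at_within has_field_derivative_rational_deriv)
next
  fix k
  show "continuous_on S (\<lambda>y. poly (rational_deriv_num p q k) y / poly q y ^ Suc k)"
    using assms has_field_derivative_rational_deriv
    by (intro continuous_at_imp_continuous_on ballI DERIV_isCont) blast
qed simp

lemma rational_deriv_num_ansatz:
  fixes a b y :: real
  shows "poly (rational_deriv_num [:b, 0, 1 - a:] [:b, 0, 1:] 1) y = - 2 * a * b * y"
    and "poly (rational_deriv_num [:b, 0, 1 - a:] [:b, 0, 1:] 2) y = a * b * (6 * y\<^sup>2 - 2 * b)"
  by (simp_all add: numeral_2_eq_2 pderiv_pCons algebra_simps power2_eq_square)

lemma smooth_ansatz: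
  fixes a b :: real
  assumes "b > 0"
  obtains D where "smooth_deriv_seq S (\<lambda>y. 1 - a * y\<^sup>2 / (y\<^sup>2 + b)) D"
    and "\<And>y. D 1 y = - 2 * a * b * y / (y\<^sup>2 + b) ^ 2"
    and "\<And>y. D 2 y = a * b * (6 * y\<^sup>2 - 2 * b) / (y\<^sup>2 + b) ^ 3"
proof -
  let ?p = "[:b, 0, 1 - a:]" and ?q = "[:b, 0, 1:]"
  define D where "D k y = poly (rational_deriv_num ?p ?q k) y / poly ?q y ^ Suc k" for k y
  have poly_q: "poly ?q y = y\<^sup>2 + b" for y
    by (simp add: power2_eq_square)
  have q_pos: "y\<^sup>2 + b > 0" for y :: real
    using assms by (simp add: add_nonneg_pos)
  have "(\<lambda>y. 1 - a * y\<^sup>2 / (y\<^sup>2 + b)) = (\<lambda>y. poly ?p y / poly ?q y)"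
  proof
    fix y
    show "1 - a * y\<^sup>2 / (y\<^sup>2 + b) = poly ?p y / poly ?q y"
      using q_pos[of y] by (simp add: poly_q field_simps power2_eq_square)
  qed
  moreover have "smooth_deriv_seq S (\<lambda>y. poly ?p y / poly ?q y) D"
  proof -
    have "poly ?q y \<noteq> 0" for y
      unfolding poly_q using q_pos[of y] by simp
    then show ?thesis
      unfolding D_def by (blast intro: smooth_deriv_seq_rational)
  qed
  moreover have "D 1 y = - 2 * a * b * y / (y\<^sup>2 + b) ^ 2"
    and "D 2 y = a * b * (6 * y\<^sup>2 - 2 * b) / (y\<^sup>2 + b) ^ 3" for y
    unfolding D_def rational_deriv_num_ansatz poly_q by (simp_all add: Suc_1 power2_eq_square)
  ultimately show ?thesis
    using that by simp
qed

definition ode_residual :: "real \<Rightarrow> real \<Rightarrow> real \<Rightarrow> real \<Rightarrow> real \<Rightarrow> real" where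
  "ode_residual d y u u' u'' =
     y\<^sup>2 * (1 - y\<^sup>2) * u'' + ((d - 3) * y - 2 * y ^ 3) * u' + (d - 2) * u * (1 - u\<^sup>2)"

lemma ode_residual_ansatz:
  fixes a b d y :: real
  assumes "y\<^sup>2 + b \<noteq> 0"
  shows "ode_residual d y (1 - a * y\<^sup>2 / (y\<^sup>2 + b))
           (- 2 * a * b * y / (y\<^sup>2 + b) ^ 2) (a * b * (6 * y\<^sup>2 - 2 * b) / (y\<^sup>2 + b) ^ 3)
    = a * y ^ 4 * (((d - 2) * (1 - a) * (2 - a) - 2 * b) * y\<^sup>2
        + b * (12 + 6 * b - 2 * d + (d - 2) * (4 - 3 * a))) / (y\<^sup>2 + b) ^ 3"
proof -
  define Q where "Q = y\<^sup>2 + b"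
  define V where "V = Q - a * y\<^sup>2"
  have Q: "Q \<noteq> 0"
    using assms by (simp add: Q_def)
  have u: "1 - a * y\<^sup>2 / Q = V / Q"
    using Q by (simp add: V_def field_simps)
  have nonlinear_term: "Q ^ 3 * ((d - 2) * (V / Q) * (1 - (V / Q)\<^sup>2)) = (d - 2) * V * (Q\<^sup>2 - V\<^sup>2)"
    and first_order_term: "Q ^ 3 * (((d - 3) * y - 2 * y ^ 3) * (- 2 * a * b * y / Q ^ 2))
      = ((d - 3) * y - 2 * y ^ 3) * (- 2 * a * b * y) * Q"
    using Q by (simp_all add: field_simps power2_eq_square power3_eq_cube)
  have "Q ^ 3 * ode_residual d y (V / Q) (- 2 * a * b * y / Q ^ 2) (a * b * (6 * y\<^sup>2 - 2 * b) / Q ^ 3)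
      = y\<^sup>2 * (1 - y\<^sup>2) * (a * b * (6 * y\<^sup>2 - 2 * b)) + ((d - 3) * y - 2 * y ^ 3) * (- 2 * a * b * y) * Q
        + (d - 2) * V * (Q\<^sup>2 - V\<^sup>2)"
    unfolding ode_residual_def distrib_left nonlinear_term first_order_term using Q by simp
  also have "\<dots> = a * y ^ 4 * (((d - 2) * (1 - a) * (2 - a) - 2 * b) * y\<^sup>2
        + b * (12 + 6 * b - 2 * d + (d - 2) * (4 - 3 * a)))"
    unfolding V_def Q_def by algebra
  finally show ?thesis
    using Q unfolding Q_def[symmetric] u by (simp add: eq_divide_eq mult.commute)
qed

lemma ansatz_solves_ode:
  fixes a b d y :: real
  assumes "2 * b = (d - 2) * (1 - a) * (2 - a)"
    and "6 * b = 2 * d - 12 - (d - 2) * (4 - 3 * a)"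
    and "y\<^sup>2 + b \<noteq> 0"
  shows "ode_residual d y (1 - a * y\<^sup>2 / (y\<^sup>2 + b))
           (- 2 * a * b * y / (y\<^sup>2 + b) ^ 2) (a * b * (6 * y\<^sup>2 - 2 * b) / (y\<^sup>2 + b) ^ 3) = 0"
proof -
  have coeff_y6: "(d - 2) * (1 - a) * (2 - a) - 2 * b = 0"
    and coeff_y4: "12 + 6 * b - 2 * d + (d - 2) * (4 - 3 * a) = 0"
    using assms(1,2) by linarith+
  show ?thesis
    unfolding ode_residual_ansatz[OF assms(3)] coeff_y6 coeff_y4 by simp
qed

lemma alpha_beta_minus_relations:
  fixes d :: int
  assumes "d \<ge> 4"
  shows "2 * beta_minus d = (real_of_int d - 2) * (1 - alpha_minus d) * (2 - alpha_minus d)"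
    and "6 * beta_minus d = 2 * real_of_int d - 12 - (real_of_int d - 2) * (4 - 3 * alpha_minus d)"
proof -
  define r where "r = real_of_int d"
  have r: "r \<ge> 4"
    using assms by (simp add: r_def)
  define t where "t = sqrt ((r - 4) / (3 * (r - 2)))"
  have t_sq: "3 * (r - 2) * t\<^sup>2 = r - 4"
    using r by (simp add: t_def)
  have "sqrt (3 * (r - 2) * (r - 4)) = sqrt ((3 * (r - 2))\<^sup>2 * ((r - 4) / (3 * (r - 2))))"
    using r by (simp add: power2_eq_square)
  also have "\<dots> = sqrt ((3 * (r - 2))\<^sup>2) * t"
    unfolding t_def by (rule real_sqrt_mult)
  also have "sqrt ((3 * (r - 2))\<^sup>2) = 3 * (r - 2)"
    using r by simp
  finally have beta: "beta_minus d = 2 / 3 * (r - 4) - (r - 2) * t"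
    by (simp add: beta_minus_def r_def)
  have alpha: "alpha_minus d = 2 - 2 * t"
    by (simp add: alpha_minus_def t_def r_def)
  have "(r - 2) * (1 - (2 - 2 * t)) * (2 - (2 - 2 * t)) = 4 / 3 * (3 * (r - 2) * t\<^sup>2) - 2 * (r - 2) * t"
    by (simp add: algebra_simps power2_eq_square)
  then show "2 * beta_minus d = (real_of_int d - 2) * (1 - alpha_minus d) * (2 - alpha_minus d)"
    unfolding alpha beta r_def[symmetric] t_sq by (simp add: algebra_simps)
  show "6 * beta_minus d = 2 * real_of_int d - 12 - (real_of_int d - 2) * (4 - 3 * alpha_minus d)"
    unfolding alpha beta r_def[symmetric] by (simp add: field_simps)
qed

lemma beta_minus_pos:
  fixes d :: int
  assumes "d \<ge> 11"
  shows "beta_minus d > 0"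
proof -
  define r where "r = real_of_int d"
  have r: "r \<ge> 11"
    using assms by (simp add: r_def)
  have "(2 * (r - 4))\<^sup>2 - 3 * (r - 2) * (r - 4) = (r - 4) * (r - 10)"
    by (simp add: algebra_simps power2_eq_square)
  also have "\<dots> > 0"
    using r by simp
  finally have "sqrt (3 * (r - 2) * (r - 4)) < sqrt ((2 * (r - 4))\<^sup>2)"
    by (simp only: real_sqrt_less_iff diff_gt_0_iff_gt)
  also have "\<dots> = 2 * (r - 4)"
    using r by simp
  finally show ?thesis
    by (simp add: beta_minus_def r_def)
qed

theorem mainTheorem3:
  fixes d :: int
  assumes "d \<ge> 11"
  shows "C_infty_on {0..1} (u_minus d) \<and>
    (\<exists>D. smooth_deriv_seq {0..1} (u_minus d) D \<and>
      (\<forall>y\<in>{0..1::real}.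
         y\<^sup>2 * (1 - y\<^sup>2) * D 2 y + ((real_of_int d - 3) * y - 2 * y ^ 3) * D 1 y
         + (real_of_int d - 2) * u_minus d y * (1 - (u_minus d y)\<^sup>2) = 0))"
proof -
  have b: "beta_minus d > 0"
    using assms by (rule beta_minus_pos)
  obtain D where smooth: "smooth_deriv_seq {0..1} (u_minus d) D"
    and D1: "\<And>y. D 1 y = - 2 * alpha_minus d * beta_minus d * y / (y\<^sup>2 + beta_minus d) ^ 2"
    and D2: "\<And>y. D 2 y = alpha_minus d * beta_minus d * (6 * y\<^sup>2 - 2 * beta_minus d)
                          / (y\<^sup>2 + beta_minus d) ^ 3"
    using smooth_ansatz[OF b, of "{0..1}" "alpha_minus d"] unfolding u_minus_def[abs_def] by blast
  have "4 \<le> d"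
    using assms by simp
  note relations = alpha_beta_minus_relations[OF this]
  have "ode_residual d y (u_minus d y) (D 1 y) (D 2 y) = 0" for y
  proof -
    have "y\<^sup>2 + beta_minus d \<noteq> 0"
      using b by (metis add_nonneg_pos zero_le_power2 less_irrefl)
    then show ?thesis
      unfolding D1 D2 u_minus_def by (rule ansatz_solves_ode[OF relations])
  qed
  then show ?thesis
    using smooth unfolding C_infty_on_def ode_residual_def
    by (intro conjI exI[of _ D] ballI) auto
qed

end
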